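(* Let $m\ge 1$, $P,Q\ge 0$ be integers with $N=P+Q\ge1$, let $D$, $F_1,\ldots,F_m$, $\mathcal{E}$, $d$ and $G_F:\mathcal{E}\to\mathcal{E}$ be as described in the context, and assume that the state network of $G_F$ is strongly connected. Then $G_F$ is chaotic in the sense of Devaney on $(\mathcal{E},d)$: it is topologically transitive, its periodic points are dense in $\mathcal{E}$, and it has sensitive dependence on initial conditions (there is $\delta>0$ such that for every $E\in\mathcal{E}$ and every $\varepsilon>0$ there exist $E'\in\mathcal{E}$ with $d(E,E')<\varepsilon$ and $n\ge0$ with $d(G_F^n(E),G_F^n(E'))>\delta$).
   Context: Let $D=\{k\,2^{-Q}: k=0,1,\ldots,2^N-1\}$ be the set of $N$-bit fixed-point numbers; each $x\in D$ is written in binary as $x=x_{P-1}x_{P-2}\ldots x_0.x_{-1}\ldots x_{-Q}$ with digits $x_j\in\{0,1\}$. For $x,y\in D$ let $x\cdot y$, $x+y$ and $\overline{x}$ denote bitwise AND, bitwise OR and bitwise NOT (complement of every one of the $N$ digits), which are again elements of $D$. Let $F_1,\ldots,F_m:D^m\to D$ be arbitrary functions. Let $\Sigma$ be the set of one-sided infinite sequences $w=w^1w^2\ldots$ with $w^k\in D$, and $\sigma:\Sigma\to\Sigma$ the left shift $\sigma(w)=w^2w^3\ldots$. Let $\mathcal{E}=\Sigma^m\times D^m$, with elements $E=((w_1,\ldots,w_m),(x_1,\ldots,x_m))$. Define $G_F:\mathcal{E}\to\mathcal{E}$ by $G_F((w_1,\ldots,w_m),x)=((\sigma(w_1),\ldots,\sigma(w_m)),(H_1,\ldots,H_m))$,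 where $x=(x_1,\ldots,x_m)$ and $H_i=(x_i\cdot\overline{w_i^1})+(F_i(x)\cdot w_i^1)$ (i.e. bit $j$ of $x_i$ is replaced by bit $j$ of $F_i(x)$ exactly when bit $j$ of $w_i^1$ is $1$). The metric on $\mathcal{E}$ is $d(E,\hat E)=\sum_{i=1}^m\sum_{k=1}^\infty \frac{|w_i^k-\hat w_i^k|}{2^{Nk}}+\sqrt{\sum_{i=1}^m (x_i-\hat x_i)^2}$. The state network of $G_F$ is the directed graph whose vertex set is $D^m$, with an edge from $\hat x$ to $\tilde x$ whenever there is some $(w_1,\ldots,w_m)\in\Sigma^m$ such that the $D^m$-component of $G_F((w_1,\ldots,w_m),\hat x)$ equals $\tilde x$. It is strongly connected if every vertex is reachable from every other vertex by a directed path. *)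

theory Defs
  imports Complex_Main
begin

text \<open>Fixed-point numbers with P integer and Q fractional bits (N = P + Q).
  The m components are indexed by a finite type 'm (so m = CARD('m) \<ge> 1).\<close>

definition Dset :: "nat \<Rightarrow> nat \<Rightarrow> real set" where
  "Dset P Q = {real k / 2 ^ Q | k. k < 2 ^ (P + Q)}"

text \<open>Integer code k of x = k 2^(-Q); its binary digits are the N digits of x.\<close>
definition fcode :: "nat \<Rightarrow> real \<Rightarrow> nat" where
  "fcode Q x = nat \<lfloor>x * 2 ^ Q\<rfloor>"

definition fdec :: "nat \<Rightarrow> nat \<Rightarrow> real" where
  "fdec Q k = real k / 2 ^ Q"

definition bit_and_D :: "nat \<Rightarrow> real \<Rightarrow> real \<Rightarrow> real" where
  "bit_and_D Q x y = fdec Q (and (fcode Q x) (fcode Q y))"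

definition bit_or_D :: "nat \<Rightarrow> real \<Rightarrow> real \<Rightarrow> real" where
  "bit_or_D Q x y = fdec Q (or (fcode Q x) (fcode Q y))"

definition bit_not_D :: "nat \<Rightarrow> nat \<Rightarrow> real \<Rightarrow> real" where
  "bit_not_D P Q x = fdec Q (xor (fcode Q x) (mask (P + Q)))"

text \<open>Phase space: w i k is the (k+1)-th term w_i^(k+1) of the sequence w_i, x i is x_i.\<close>
definition Espace :: "nat \<Rightarrow> nat \<Rightarrow> (('m \<Rightarrow> nat \<Rightarrow> real) \<times> ('m \<Rightarrow> real)) set" where
  "Espace P Q = {(w, x). (\<forall>i k. w i k \<in> Dset P Q) \<and> (\<forall>i. x i \<in> Dset P Q)}"

definition Gmap :: "nat \<Rightarrow> nat \<Rightarrow> ('m \<Rightarrow> ('m \<Rightarrow> real) \<Rightarrow> real)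
    \<Rightarrow> ('m \<Rightarrow> nat \<Rightarrow> real) \<times> ('m \<Rightarrow> real) \<Rightarrow> ('m \<Rightarrow> nat \<Rightarrow> real) \<times> ('m \<Rightarrow> real)" where
  "Gmap P Q F E = (case E of (w, x) \<Rightarrow>
     ((\<lambda>i k. w i (Suc k)),
      (\<lambda>i. bit_or_D Q (bit_and_D Q (x i) (bit_not_D P Q (w i 0)))
                       (bit_and_D Q (F i x) (w i 0)))))"

definition dist_E :: "nat \<Rightarrow> ('m::finite \<Rightarrow> nat \<Rightarrow> real) \<times> ('m \<Rightarrow> real)
    \<Rightarrow> ('m \<Rightarrow> nat \<Rightarrow> real) \<times> ('m \<Rightarrow> real) \<Rightarrow> real" where
  "dist_E N E E' = (case E of (w, x) \<Rightarrow> case E' of (w', x') \<Rightarrow>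
     (\<Sum>i\<in>UNIV. (\<Sum>k. \<bar>w i k - w' i k\<bar> / 2 ^ (N * Suc k)))
     + sqrt (\<Sum>i\<in>UNIV. (x i - x' i)\<^sup>2))"

definition state_edges :: "nat \<Rightarrow> nat \<Rightarrow> ('m \<Rightarrow> ('m \<Rightarrow> real) \<Rightarrow> real)
    \<Rightarrow> (('m \<Rightarrow> real) \<times> ('m \<Rightarrow> real)) set" where
  "state_edges P Q F = {(a, b). (\<forall>i. a i \<in> Dset P Q) \<and> (\<forall>i. b i \<in> Dset P Q) \<and>
      (\<exists>w. (\<forall>i k. w i k \<in> Dset P Q) \<and> snd (Gmap P Q F (w, a)) = b)}"

definition strongly_connected_state_network :: "nat \<Rightarrow> nat \<Rightarrow> ('m \<Rightarrow> ('m \<Rightarrow> real) \<Rightarrow> real) \<Rightarrow> bool" where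
  "strongly_connected_state_network P Q F \<longleftrightarrow>
     (\<forall>a b. (\<forall>i. a i \<in> Dset P Q) \<longrightarrow> (\<forall>i. b i \<in> Dset P Q) \<longrightarrow>
        (a, b) \<in> (state_edges P Q F)\<^sup>*)"

definition d_open :: "'a set \<Rightarrow> ('a \<Rightarrow> 'a \<Rightarrow> real) \<Rightarrow> 'a set \<Rightarrow> bool" where
  "d_open S d U \<longleftrightarrow> U \<subseteq> S \<and> (\<forall>x\<in>U. \<exists>e>0. \<forall>y\<in>S. d x y < e \<longrightarrow> y \<in> U)"

definition topologically_transitive :: "'a set \<Rightarrow> ('a \<Rightarrow> 'a \<Rightarrow> real) \<Rightarrow> ('a \<Rightarrow> 'a) \<Rightarrow> bool" where
  "topologically_transitive S d f \<longleftrightarrow>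
     (\<forall>U V. d_open S d U \<longrightarrow> d_open S d V \<longrightarrow> U \<noteq> {} \<longrightarrow> V \<noteq> {} \<longrightarrow>
        (\<exists>n>0. (f ^^ n) ` U \<inter> V \<noteq> {}))"

definition dense_periodic_points :: "'a set \<Rightarrow> ('a \<Rightarrow> 'a \<Rightarrow> real) \<Rightarrow> ('a \<Rightarrow> 'a) \<Rightarrow> bool" where
  "dense_periodic_points S d f \<longleftrightarrow>
     (\<forall>x\<in>S. \<forall>e>0. \<exists>p\<in>S. d x p < e \<and> (\<exists>n>0. (f ^^ n) p = p))"

definition sensitive_dependence :: "'a set \<Rightarrow> ('a \<Rightarrow> 'a \<Rightarrow> real) \<Rightarrow> ('a \<Rightarrow> 'a) \<Rightarrow> bool" where
  "sensitive_dependence S d f \<longleftrightarrow>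
     (\<exists>\<delta>>0. \<forall>x\<in>S. \<forall>e>0. \<exists>y\<in>S. d x y < e \<and> (\<exists>n. d ((f ^^ n) x) ((f ^^ n) y) > \<delta>))"

definition devaney_chaotic :: "'a set \<Rightarrow> ('a \<Rightarrow> 'a \<Rightarrow> real) \<Rightarrow> ('a \<Rightarrow> 'a) \<Rightarrow> bool" where
  "devaney_chaotic S d f \<longleftrightarrow>
     topologically_transitive S d f \<and> dense_periodic_points S d f \<and> sensitive_dependence S d f"

end

theory Submission
  imports Defs
begin

text \<open>The map acts on the strategy by the shift and on the state by a step that depends
  only on the first strategy term, so the state after \<open>n\<close> iterations depends only on the first
  \<open>n\<close> strategy terms, while the metric sees the strategy terms beyond the \<open>K\<close>-th only with weight
  about \<open>2\<^sup>-\<^sup>K\<close>. Hence any point can be approximated by one whose strategy keeps a long prefix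
  and then continues arbitrarily. Strong connectivity of the state network lets that continuation
  steer the state to any target, which gives transitivity (then append the target's strategy) and
  dense periodic points (repeat the prefix and the steering block forever). Sensitivity needs no
  hypothesis on \<open>F\<close>: changing one far-away strategy term by one digit is invisible now but
  produces a fixed distance once it has been shifted to the front.\<close>

lemma and_nat_less_exp:
  assumes "(a::nat) < 2 ^ n" shows "and a b < 2 ^ n"
proof -
  have "int (and a b) \<le> int a"
    by (simp add: of_nat_and_eq)
  with assms show ?thesis by linarith
qed

lemma or_nat_less_exp:
  assumes "(a::nat) < 2 ^ n" "b < 2 ^ n" shows "or a b < 2 ^ n"
  using assms by (metis take_bit_nat_eq_self_iff take_bit_or take_bit_nat_less_exp)

lemma Dset_bounds:
  assumes "x \<in> Dset P Q" shows "0 \<le> x" "x < 2 ^ P"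
proof -
  obtain k where k: "x = real k / 2 ^ Q" "k < 2 ^ (P + Q)"
    using assms unfolding Dset_def by blast
  have "real k < 2 ^ (P + Q)"
    using k(2) by (metis of_nat_less_numeral_power_cancel_iff)
  then show "x < 2 ^ P"
    using k(1) by (simp add: power_add divide_less_eq)
  show "0 \<le> x" using k(1) by simp
qed

lemma zero_in_Dset: "0 \<in> Dset P Q"
  unfolding Dset_def by force

lemma fdec_in_Dset: "k < 2 ^ (P + Q) \<Longrightarrow> fdec Q k \<in> Dset P Q"
  unfolding Dset_def fdec_def by blast

lemma fcode_fdec [simp]: "fcode Q (fdec Q k) = k"
  unfolding fcode_def fdec_def by simp

lemma fcode_less_exp: "x \<in> Dset P Q \<Longrightarrow> fcode Q x < 2 ^ (P + Q)"
  unfolding Dset_def by (auto simp flip: fdec_def)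

lemma bit_and_D_in_Dset: "x \<in> Dset P Q \<Longrightarrow> bit_and_D Q x y \<in> Dset P Q"
  unfolding bit_and_D_def by (intro fdec_in_Dset and_nat_less_exp fcode_less_exp)

lemma bit_or_D_in_Dset: "x \<in> Dset P Q \<Longrightarrow> y \<in> Dset P Q \<Longrightarrow> bit_or_D Q x y \<in> Dset P Q"
  unfolding bit_or_D_def by (intro fdec_in_Dset or_nat_less_exp fcode_less_exp)

lemma Dset_exists_far:
  assumes "P + Q \<ge> 1" "x \<in> Dset P Q"
  shows "\<exists>y\<in>Dset P Q. 1 / 2 ^ Q \<le> \<bar>x - y\<bar>"
proof (cases "x = 0")
  case True
  have "(1::nat) < 2 ^ (P + Q)" using assms(1) by (intro one_less_power) auto
  then have "1 / 2 ^ Q \<in> Dset P Q" using fdec_in_Dset by (fastforce simp: fdec_def)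
  with True show ?thesis by force
next
  case False
  then obtain k where "x = real k / 2 ^ Q" "k \<noteq> 0"
    using assms(2) unfolding Dset_def by auto
  then have "1 / 2 ^ Q \<le> x" by (simp add: divide_right_mono)
  then show ?thesis using zero_in_Dset by force
qed

lemma mem_Espace_iff:
  "(w, x) \<in> Espace P Q \<longleftrightarrow> (\<forall>i k. w i k \<in> Dset P Q) \<and> (\<forall>i. x i \<in> Dset P Q)"
  by (simp add: Espace_def)

lemma Gmap_state_in_Dset:
  assumes "x i \<in> Dset P Q" "F i x \<in> Dset P Q"
  shows "snd (Gmap P Q F (w, x)) i \<in> Dset P Q"
  using assms by (simp add: Gmap_def bit_or_D_in_Dset bit_and_D_in_Dset)

lemma Gmap_iterate_Suc:
  "(Gmap P Q F ^^ Suc n) (w, x) = (Gmap P Q F ^^ n) ((\<lambda>i k. w i (Suc k)), snd (Gmap P Q F (w, x)))"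
  by (simp add: funpow_Suc_right Gmap_def del: funpow.simps)

lemma Gmap_iterate_eq:
  "(Gmap P Q F ^^ n) (w, x) = ((\<lambda>i k. w i (k + n)), snd ((Gmap P Q F ^^ n) (w, x)))"
proof -
  have "fst ((Gmap P Q F ^^ n) (w, x)) = (\<lambda>i k. w i (k + n))"
    by (induction n arbitrary: w x) (simp_all add: Gmap_iterate_Suc del: funpow.simps)
  then show ?thesis by (simp add: prod_eq_iff)
qed

lemma Gmap_iterate_state_cong:
  assumes "\<forall>i k. k < n \<longrightarrow> w i k = w' i k"
  shows "snd ((Gmap P Q F ^^ n) (w, x)) = snd ((Gmap P Q F ^^ n) (w', x))"
  using assms
proof (induction n arbitrary: w w' x)
  case (Suc n)
  have "snd (Gmap P Q F (w, x)) = snd (Gmap P Q F (w', x))"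
    using Suc.prems by (simp add: Gmap_def)
  moreover have "\<forall>i k. k < n \<longrightarrow> w i (Suc k) = w' i (Suc k)"
    using Suc.prems by simp
  ultimately show ?case
    unfolding Gmap_iterate_Suc by (simp add: Suc.IH del: funpow.simps)
qed simp

lemma Gmap_iterate_state_in_Dset:
  assumes "\<forall>i. x i \<in> Dset P Q" "\<And>i x. \<forall>j. x j \<in> Dset P Q \<Longrightarrow> F i x \<in> Dset P Q"
  shows "\<forall>i. snd ((Gmap P Q F ^^ n) (w, x)) i \<in> Dset P Q"
  using assms(1)
proof (induction n arbitrary: w x)
  case (Suc n)
  then have "\<forall>i. snd (Gmap P Q F (w, x)) i \<in> Dset P Q"
    by (simp add: Gmap_state_in_Dset assms(2))
  then show ?case
    unfolding Gmap_iterate_Suc using Suc.IH by blast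
qed simp

definition append_strategy :: "nat \<Rightarrow> ('m \<Rightarrow> nat \<Rightarrow> 'a) \<Rightarrow> ('m \<Rightarrow> nat \<Rightarrow> 'a) \<Rightarrow> 'm \<Rightarrow> nat \<Rightarrow> 'a"
  where "append_strategy n u v = (\<lambda>i k. if k < n then u i k else v i (k - n))"

lemma append_strategy_in_Dset:
  "\<forall>i k. u i k \<in> Dset P Q \<Longrightarrow> \<forall>i k. v i k \<in> Dset P Q \<Longrightarrow> \<forall>i k. append_strategy n u v i k \<in> Dset P Q"
  by (simp add: append_strategy_def)

lemma Gmap_iterate_append_strategy:
  "(Gmap P Q F ^^ n) (append_strategy n u v, x) = (v, snd ((Gmap P Q F ^^ n) (u, x)))"
proof -
  have "snd ((Gmap P Q F ^^ n) (append_strategy n u v, x)) = snd ((Gmap P Q F ^^ n) (u, x))"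
    by (rule Gmap_iterate_state_cong) (simp add: append_strategy_def)
  moreover have "(\<lambda>i k. append_strategy n u v i (k + n)) = v"
    by (simp add: append_strategy_def)
  ultimately show ?thesis by (metis Gmap_iterate_eq)
qed

lemma state_edges_rtrancl_steerable:
  assumes "(a, b) \<in> (state_edges P Q F)\<^sup>*"
  shows "\<exists>n u. (\<forall>i k. u i k \<in> Dset P Q) \<and> snd ((Gmap P Q F ^^ n) (u, a)) = b"
  using assms
proof (induction rule: converse_rtrancl_induct)
  case base
  show ?case by (rule exI[of _ 0], rule exI[of _ "\<lambda>_ _. 0"]) (simp add: zero_in_Dset)
next
  case (step a c)
  obtain n u where u: "\<forall>i k. u i k \<in> Dset P Q" "snd ((Gmap P Q F ^^ n) (u, c)) = b"
    using step.IH by blast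
  obtain w where w: "\<forall>i k. w i k \<in> Dset P Q" "snd (Gmap P Q F (w, a)) = c"
    using step.hyps(1) unfolding state_edges_def by blast
  have "(Gmap P Q F ^^ (n + 1)) (append_strategy 1 w u, a) = (Gmap P Q F ^^ n) (u, c)"
    unfolding funpow_add comp_apply Gmap_iterate_append_strategy using w(2) by simp
  then have "snd ((Gmap P Q F ^^ (n + 1)) (append_strategy 1 w u, a)) = b"
    using u(2) by simp
  moreover have "\<forall>i k. append_strategy 1 w u i k \<in> Dset P Q"
    using w(1) u(1) by (rule append_strategy_in_Dset)
  ultimately show ?case by blast
qed

lemma strongly_connected_steerable:
  assumes "strongly_connected_state_network P Q F" "\<forall>i. a i \<in> Dset P Q" "\<forall>i. b i \<in> Dset P Q"
  shows "\<exists>n u. (\<forall>i k. u i k \<in> Dset P Q) \<and> snd ((Gmap P Q F ^^ n) (u, a)) = b"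
  using assms unfolding strongly_connected_state_network_def by (blast intro: state_edges_rtrancl_steerable)

lemma dist_E_agreeing_prefix_le:
  fixes w w' :: "'m::finite \<Rightarrow> nat \<Rightarrow> real"
  assumes "N \<ge> 1" "\<forall>i k. w i k \<in> Dset P Q" "\<forall>i k. w' i k \<in> Dset P Q"
    and "\<forall>i k. k < K \<longrightarrow> w i k = w' i k"
  shows "dist_E N (w, x) (w', x) \<le> real (card (UNIV :: 'm set)) * 2 ^ P / 2 ^ K"
proof -
  have tail_le: "(\<Sum>k. \<bar>w i k - w' i k\<bar> / 2 ^ (N * Suc k)) \<le> 2 ^ P / 2 ^ K" for i
  proof -
    define f where "f k = \<bar>w i k - w' i k\<bar> / 2 ^ (N * Suc k)" for k
    define g :: "nat \<Rightarrow> real" where "g k = 2 ^ P / 2 ^ K * (1 / 2) ^ Suc k" for k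
    have g_sums: "g sums (2 ^ P / 2 ^ K)"
      unfolding g_def using sums_mult[OF power_half_series, of "2 ^ P / 2 ^ K"] by (simp only: mult_1_right)
    have term_le: "f (k + K) \<le> g k" for k
    proof -
      have "\<bar>w i (k + K) - w' i (k + K)\<bar> \<le> 2 ^ P"
        using Dset_bounds[OF assms(2)[rule_format, of i "k + K"]]
          Dset_bounds[OF assms(3)[rule_format, of i "k + K"]]
        by (simp add: abs_le_iff)
      moreover have "(2::real) ^ Suc (k + K) \<le> 2 ^ (N * Suc (k + K))"
        using mult_le_mono1[OF assms(1), of "Suc (k + K)"] by (intro power_increasing) simp_all
      ultimately have "f (k + K) \<le> 2 ^ P / 2 ^ Suc (k + K)"
        unfolding f_def by (intro frac_le) simp_all
      then show ?thesis by (simp add: g_def power_add field_simps)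
    qed
    have tail_summable: "summable (\<lambda>k. f (k + K))"
      by (rule summable_comparison_test'[OF sums_summable[OF g_sums], of 0])
        (use term_le in \<open>simp add: f_def\<close>)
    have "\<And>k. k < K \<Longrightarrow> f k = 0"
      using assms(4) by (simp add: f_def)
    then have "f sums (\<Sum>k. f (k + K))"
      using sums_zero_iff_shift tail_summable summable_sums by blast
    then have "suminf f = (\<Sum>k. f (k + K))"
      by (rule sums_unique[symmetric])
    also have "\<dots> \<le> suminf g"
      using term_le tail_summable sums_summable[OF g_sums] by (rule suminf_le)
    also have "\<dots> = 2 ^ P / 2 ^ K"
      using g_sums by (rule sums_unique[symmetric])
    finally show ?thesis unfolding f_def .
  qed
  have "dist_E N (w, x) (w', x) = (\<Sum>i\<in>UNIV. \<Sum>k. \<bar>w i k - w' i k\<bar> / 2 ^ (N * Suc k))"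
    by (simp add: dist_E_def)
  also have "\<dots> \<le> (\<Sum>i\<in>(UNIV::'m set). 2 ^ P / 2 ^ K)"
    by (rule sum_mono) (rule tail_le)
  finally show ?thesis by simp
qed

lemma exists_divide_power_two_less:
  fixes c e :: real
  assumes "e > 0"
  shows "\<exists>K>0. c / 2 ^ K < e"
proof -
  have "(\<lambda>K. c / 2 ^ K) \<longlonglongrightarrow> 0"
    by (rule LIMSEQ_divide_realpow_zero) simp
  then have "\<forall>\<^sub>F K in sequentially. c / 2 ^ K < e"
    using assms by (rule order_tendstoD(2))
  then have "\<forall>\<^sub>F K in sequentially. K > 0 \<and> c / 2 ^ K < e"
    using eventually_gt_at_top[of 0] by (rule eventually_conj[rotated])
  then show ?thesis
    unfolding eventually_sequentially by auto
qed

lemma dist_E_single_term: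
  fixes w w' :: "'m::finite \<Rightarrow> nat \<Rightarrow> real"
  assumes "\<forall>i k. (i, k) \<noteq> (i0, K) \<longrightarrow> w i k = w' i k"
  shows "dist_E N (w, x) (w', x) = \<bar>w i0 K - w' i0 K\<bar> / 2 ^ (N * Suc K)"
proof -
  define c where "c = \<bar>w i0 K - w' i0 K\<bar> / 2 ^ (N * Suc K)"
  have "(\<lambda>k. \<bar>w i k - w' i k\<bar> / 2 ^ (N * Suc k)) = (\<lambda>k. if k = K then (if i = i0 then c else 0) else 0)" for i
    using assms unfolding c_def by (auto intro!: ext)
  then have "(\<Sum>k. \<bar>w i k - w' i k\<bar> / 2 ^ (N * Suc k)) = (if i = i0 then c else 0)" for i
    using sums_unique[OF sums_single[of K "\<lambda>_. if i = i0 then c else 0"]] by simp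
  then show ?thesis unfolding dist_E_def by (simp add: c_def)
qed

lemma Gmap_topologically_transitive:
  fixes F :: "'m::finite \<Rightarrow> ('m \<Rightarrow> real) \<Rightarrow> real"
  assumes N: "P + Q \<ge> 1"
    and closed: "\<And>i x. \<forall>j. x j \<in> Dset P Q \<Longrightarrow> F i x \<in> Dset P Q"
    and connected: "strongly_connected_state_network P Q F"
  shows "topologically_transitive (Espace P Q) (dist_E (P + Q)) (Gmap P Q F)"
  unfolding topologically_transitive_def
proof (intro allI impI)
  fix U V :: "(('m \<Rightarrow> nat \<Rightarrow> real) \<times> ('m \<Rightarrow> real)) set"
  assume U: "d_open (Espace P Q) (dist_E (P + Q)) U" and V: "d_open (Espace P Q) (dist_E (P + Q)) V"
    and "U \<noteq> {}" "V \<noteq> {}"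
  then obtain w1 x1 w2 x2 where in_U: "(w1, x1) \<in> U" and in_V: "(w2, x2) \<in> V" by auto
  then have S1: "\<forall>i k. w1 i k \<in> Dset P Q" "\<forall>i. x1 i \<in> Dset P Q"
    and S2: "\<forall>i k. w2 i k \<in> Dset P Q" "\<forall>i. x2 i \<in> Dset P Q"
    using U V unfolding d_open_def by (auto simp: mem_Espace_iff)
  obtain e where e: "e > 0" "\<forall>E\<in>Espace P Q. dist_E (P + Q) (w1, x1) E < e \<longrightarrow> E \<in> U"
    using U in_U unfolding d_open_def by blast
  obtain K where K: "K > 0" "real (card (UNIV :: 'm set)) * 2 ^ P / 2 ^ K < e"
    using exists_divide_power_two_less[OF e(1)] by blast
  define y where "y = snd ((Gmap P Q F ^^ K) (w1, x1))"
  have "\<forall>i. y i \<in> Dset P Q"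
    unfolding y_def using S1(2) closed by (rule Gmap_iterate_state_in_Dset)
  then obtain L u where u: "\<forall>i k. u i k \<in> Dset P Q" "snd ((Gmap P Q F ^^ L) (u, y)) = x2"
    using strongly_connected_steerable[OF connected _ S2(2)] by blast
  define w where "w = append_strategy K w1 (append_strategy L u w2)"
  have w_in_Dset: "\<forall>i k. w i k \<in> Dset P Q"
    unfolding w_def using S1(1) u(1) S2(1) by (intro append_strategy_in_Dset)
  have "dist_E (P + Q) (w1, x1) (w, x1) \<le> real (card (UNIV :: 'm set)) * 2 ^ P / 2 ^ K"
    using N S1(1) w_in_Dset by (rule dist_E_agreeing_prefix_le) (simp add: w_def append_strategy_def)
  then have "(w, x1) \<in> U"
    using e(2) K(2) w_in_Dset S1(2) by (simp add: mem_Espace_iff)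
  moreover have "(Gmap P Q F ^^ (L + K)) (w, x1) = (w2, x2)"
    unfolding funpow_add comp_apply w_def Gmap_iterate_append_strategy y_def[symmetric] u(2) ..
  ultimately have "(Gmap P Q F ^^ (L + K)) ` U \<inter> V \<noteq> {}"
    using in_V by (metis IntI empty_iff image_eqI)
  then show "\<exists>n>0. (Gmap P Q F ^^ n) ` U \<inter> V \<noteq> {}"
    using K(1) by (intro exI[of _ "L + K"]) simp
qed

lemma Gmap_dense_periodic_points:
  fixes F :: "'m::finite \<Rightarrow> ('m \<Rightarrow> real) \<Rightarrow> real"
  assumes N: "P + Q \<ge> 1"
    and closed: "\<And>i x. \<forall>j. x j \<in> Dset P Q \<Longrightarrow> F i x \<in> Dset P Q"
    and connected: "strongly_connected_state_network P Q F"
  shows "dense_periodic_points (Espace P Q) (dist_E (P + Q)) (Gmap P Q F)"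
  unfolding dense_periodic_points_def
proof (intro ballI allI impI)
  fix E :: "('m \<Rightarrow> nat \<Rightarrow> real) \<times> ('m \<Rightarrow> real)" and e :: real
  assume "E \<in> Espace P Q" "e > 0"
  obtain w x where E: "E = (w, x)" by fastforce
  with \<open>E \<in> Espace P Q\<close> have S: "\<forall>i k. w i k \<in> Dset P Q" "\<forall>i. x i \<in> Dset P Q"
    by (simp_all add: mem_Espace_iff)
  obtain K where K: "K > 0" "real (card (UNIV :: 'm set)) * 2 ^ P / 2 ^ K < e"
    using exists_divide_power_two_less[OF \<open>e > 0\<close>] by blast
  define y where "y = snd ((Gmap P Q F ^^ K) (w, x))"
  have "\<forall>i. y i \<in> Dset P Q"
    unfolding y_def using S(2) closed by (rule Gmap_iterate_state_in_Dset)
  then obtain L u where u: "\<forall>i k. u i k \<in> Dset P Q" "snd ((Gmap P Q F ^^ L) (u, y)) = x"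
    using strongly_connected_steerable[OF connected _ S(2)] by blast
  define q where "q = append_strategy K w u"
  define p where "p = (\<lambda>i k. q i (k mod (K + L)))"
  have p_in_Dset: "\<forall>i k. p i k \<in> Dset P Q"
    unfolding p_def q_def using append_strategy_in_Dset[OF S(1) u(1)] by blast
  have "dist_E (P + Q) (w, x) (p, x) \<le> real (card (UNIV :: 'm set)) * 2 ^ P / 2 ^ K"
    using N S(1) p_in_Dset by (rule dist_E_agreeing_prefix_le) (simp add: p_def q_def append_strategy_def)
  moreover have "(Gmap P Q F ^^ (K + L)) (p, x) = (p, x)"
  proof -
    have "p = append_strategy (K + L) q p"
      by (auto simp: p_def append_strategy_def le_mod_geq intro!: ext)
    moreover have "snd ((Gmap P Q F ^^ (L + K)) (q, x)) = x"
      unfolding funpow_add comp_apply q_def Gmap_iterate_append_strategy y_def[symmetric] u(2) ..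
    ultimately show ?thesis
      using Gmap_iterate_append_strategy[where n="K + L" and u=q and v=p] by (simp add: add.commute)
  qed
  ultimately show "\<exists>p\<in>Espace P Q. dist_E (P + Q) E p < e \<and> (\<exists>n>0. (Gmap P Q F ^^ n) p = p)"
    using E K p_in_Dset S(2) by (intro bexI[of _ "(p, x)"]) (auto simp: mem_Espace_iff)
qed

lemma Gmap_sensitive_dependence:
  fixes F :: "'m::finite \<Rightarrow> ('m \<Rightarrow> real) \<Rightarrow> real"
  assumes N: "P + Q \<ge> 1"
  shows "sensitive_dependence (Espace P Q) (dist_E (P + Q)) (Gmap P Q F)"
  unfolding sensitive_dependence_def
proof (intro exI[of _ "1 / 2 ^ Suc (Q + (P + Q))"] conjI ballI allI impI)
  fix E :: "('m \<Rightarrow> nat \<Rightarrow> real) \<times> ('m \<Rightarrow> real)" and e :: real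
  assume "E \<in> Espace P Q" "e > 0"
  obtain w x where E: "E = (w, x)" by fastforce
  with \<open>E \<in> Espace P Q\<close> have S: "\<forall>i k. w i k \<in> Dset P Q" "\<forall>i. x i \<in> Dset P Q"
    by (simp_all add: mem_Espace_iff)
  obtain K where K: "real (card (UNIV :: 'm set)) * 2 ^ P / 2 ^ K < e"
    using exists_divide_power_two_less[OF \<open>e > 0\<close>] by blast
  fix i0 :: 'm
  obtain v where v: "v \<in> Dset P Q" "1 / 2 ^ Q \<le> \<bar>w i0 K - v\<bar>"
    using Dset_exists_far[OF N S(1)[rule_format, of i0 K]] by blast
  define w' where "w' = (\<lambda>i k. if (i, k) = (i0, K) then v else w i k)"
  have w'_in_Dset: "\<forall>i k. w' i k \<in> Dset P Q"
    using S(1) v(1) by (simp add: w'_def)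
  have "dist_E (P + Q) E (w', x) \<le> real (card (UNIV :: 'm set)) * 2 ^ P / 2 ^ K"
    unfolding E using N S(1) w'_in_Dset by (rule dist_E_agreeing_prefix_le) (simp add: w'_def)
  with K have close: "dist_E (P + Q) E (w', x) < e" by linarith
  define s where "s = snd ((Gmap P Q F ^^ K) (w, x))"
  have "snd ((Gmap P Q F ^^ K) (w', x)) = s"
    unfolding s_def by (rule Gmap_iterate_state_cong) (simp add: w'_def)
  then have "(Gmap P Q F ^^ K) (w', x) = ((\<lambda>i k. w' i (k + K)), s)"
    by (subst Gmap_iterate_eq) (simp only:)
  moreover have "(Gmap P Q F ^^ K) E = ((\<lambda>i k. w i (k + K)), s)"
    unfolding E s_def by (rule Gmap_iterate_eq)
  moreover have "dist_E (P + Q) ((\<lambda>i k. w i (k + K)), s) ((\<lambda>i k. w' i (k + K)), s)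
      = \<bar>w i0 (0 + K) - w' i0 (0 + K)\<bar> / 2 ^ ((P + Q) * Suc 0)"
    by (rule dist_E_single_term) (simp add: w'_def)
  ultimately have "dist_E (P + Q) ((Gmap P Q F ^^ K) E) ((Gmap P Q F ^^ K) (w', x))
      = \<bar>w i0 K - v\<bar> / 2 ^ (P + Q)"
    by (simp add: w'_def)
  also have "\<dots> \<ge> 1 / 2 ^ Q / 2 ^ (P + Q)"
    using divide_right_mono[OF v(2), of "2 ^ (P + Q)"] by simp
  finally have "dist_E (P + Q) ((Gmap P Q F ^^ K) E) ((Gmap P Q F ^^ K) (w', x)) > 1 / 2 ^ Suc (Q + (P + Q))"
    by (simp add: power_add field_simps)
  moreover have "(w', x) \<in> Espace P Q"
    using w'_in_Dset S(2) by (simp add: mem_Espace_iff)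
  ultimately show "\<exists>E'\<in>Espace P Q. dist_E (P + Q) E E' < e \<and>
      (\<exists>n. dist_E (P + Q) ((Gmap P Q F ^^ n) E) ((Gmap P Q F ^^ n) E') > 1 / 2 ^ Suc (Q + (P + Q)))"
    using close by blast
qed simp

theorem mainTheorem4:
  fixes P Q :: nat and F :: "'m::finite \<Rightarrow> ('m \<Rightarrow> real) \<Rightarrow> real"
  assumes "P + Q \<ge> 1"
    and "\<And>i x. (\<forall>j. x j \<in> Dset P Q) \<Longrightarrow> F i x \<in> Dset P Q"
    and "strongly_connected_state_network P Q F"
  shows "devaney_chaotic (Espace P Q) (dist_E (P + Q)) (Gmap P Q F)"
  unfolding devaney_chaotic_def
  using Gmap_topologically_transitive[OF assms] Gmap_dense_periodic_points[OF assms]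
    Gmap_sensitive_dependence[OF assms(1)]
  by blast

end
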